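(* For every forest $F$, the support of $\mathcal{M}_f(\cdot;F)$ is $A(F)$. Moreover, list the elements of $A=A(F)$ as $a_1,\dots,a_k$ in increasing order of progeny (so $a_k=r_1$). Then: (a) if $k=1$, $\mathcal{M}_f(r_1;F)=\frac12$; (b) if $k\ge2$, then $\mathcal{M}_f(a_i;F)=\frac12\log_2\frac{P(a_i)}{P(a_{i-1})}$ for all $1<i\le k$, and $\frac12\log_2\frac{2P(a_1)}{P^*}\le\mathcal{M}_f(a_1;F)\le\frac12$.
   Context: Let $N$ be a finite, totally ordered set of vertices. A directed forest on $N$ is a directed acyclic graph on $N$ with every out-degree at most $1$. For a forest $F$: roots are vertices with no out-edge; $T(x;F)$ is the subtree rooted at $x$ (vertices with a directed path to $x$, including $x$); $P(x)=P(x;F)=|T(x;F)|$; $P^*=\max_xP(x;F)$; $\underline{P}(x;F)=\max_{y\in T(x;F)\setminus\{x\}}P(y;F)$; $F_x$ is $F$ with the out-edge of $x$ removed (if any). Write $P(x)\succ P(y)$ iff $P(x)>P(y)$ or ($P(x)=P(y)$ and $x<y$); $r_1(F)$ is the root of $F$ maximal for $\succ$. $A(F)=\{x\in N:x=r_1(F_x)\}$ (this set forms a directed path in $F$ ending at $r_1$). The mechanism $\mathcal{M}_f$: on roots, $\mathcal{M}_f(r_1(F);F)=1/2$ if $|A(F)|=1$, $=\frac12\log_2\frac{P(r_1)}{\underline{P}(r_1)}$ if $|A(F)|\ge2$, and $\mathcal{M}_f(r;F)=0$ for all other roots $r$; on a non-root $x$, $\mathcal{M}_f(x;F)=\mathcal{M}_f(x;F_x)$.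 *)

theory Defs
  imports Complex_Main
begin

definition forest :: "'a::linorder set \<Rightarrow> ('a \<times> 'a) set \<Rightarrow> bool" where
  "forest N E \<longleftrightarrow> finite N \<and> E \<subseteq> N \<times> N \<and> acyclic E \<and>
     (\<forall>x y z. (x, y) \<in> E \<and> (x, z) \<in> E \<longrightarrow> y = z)"

definition roots :: "'a set \<Rightarrow> ('a \<times> 'a) set \<Rightarrow> 'a set" where
  "roots N E = {x \<in> N. \<forall>y. (x, y) \<notin> E}"

definition subtree :: "'a set \<Rightarrow> ('a \<times> 'a) set \<Rightarrow> 'a \<Rightarrow> 'a set" where
  "subtree N E x = {y \<in> N. (y, x) \<in> E\<^sup>*}"

definition progeny :: "'a set \<Rightarrow> ('a \<times> 'a) set \<Rightarrow> 'a \<Rightarrow> nat" where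
  "progeny N E x = card (subtree N E x)"

definition Pstar :: "'a set \<Rightarrow> ('a \<times> 'a) set \<Rightarrow> nat" where
  "Pstar N E = Max (progeny N E ` N)"

definition Punder :: "'a set \<Rightarrow> ('a \<times> 'a) set \<Rightarrow> 'a \<Rightarrow> nat" where
  "Punder N E x = Max (progeny N E ` (subtree N E x - {x}))"

definition cut :: "('a \<times> 'a) set \<Rightarrow> 'a \<Rightarrow> ('a \<times> 'a) set" where
  "cut E x = {(u, v) \<in> E. u \<noteq> x}"

definition succ_prog :: "'a::linorder set \<Rightarrow> ('a \<times> 'a) set \<Rightarrow> 'a \<Rightarrow> 'a \<Rightarrow> bool" where
  "succ_prog N E x y \<longleftrightarrow> progeny N E x > progeny N E y \<or>
     (progeny N E x = progeny N E y \<and> x < y)"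

definition r1 :: "'a::linorder set \<Rightarrow> ('a \<times> 'a) set \<Rightarrow> 'a" where
  "r1 N E = (THE r. r \<in> roots N E \<and> (\<forall>r' \<in> roots N E. r' \<noteq> r \<longrightarrow> succ_prog N E r r'))"

definition Aset :: "'a::linorder set \<Rightarrow> ('a \<times> 'a) set \<Rightarrow> 'a set" where
  "Aset N E = {x \<in> N. x = r1 N (cut E x)}"

definition Mroot :: "'a::linorder set \<Rightarrow> ('a \<times> 'a) set \<Rightarrow> 'a \<Rightarrow> real" where
  "Mroot N E r =
     (if r = r1 N E then
        (if card (Aset N E) = 1 then 1/2
         else 1/2 * log 2 (real (progeny N E r) / real (Punder N E r)))
      else 0)"

definition Mf :: "'a::linorder set \<Rightarrow> ('a \<times> 'a) set \<Rightarrow> 'a \<Rightarrow> real" where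
  "Mf N E x = (if x \<in> roots N E then Mroot N E x else Mroot N (cut E x) x)"

end

(*
  Cutting the out-edge of x makes x a root, and x \<in> A(F) exactly when x then beats every
  root of F in the order \<succ>.  In particular an element c of A(F) beats the root R above
  it, which is left with P(R) - P(c), so P(R) \<le> 2 P(c).  Two incomparable elements of
  A(F) below r_1 would thus have progenies adding up to at least P(r_1), contradicting the
  disjointness of their subtrees; hence A(F) is a chain ordered by progeny, closed upwards,
  and consecutive elements are joined by an edge.

  For x \<in> A(F) the mechanism is evaluated in F_x, where x = r_1.  If A(F_x) has a second
  element, some child c of x lies in A(F_x); a proper descendant of x not below c has a
  subtree disjoint from that of c, so P_under(x) = P(c), and P(x) \<le> 2 P(c), whence
  0 < M_f(x) \<le> 1/2.  For consecutive a_(i-1), a_i of A(F) the child is a_(i-1), giving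
  the formula.  For a_1 the child c is not in A(F), so c loses in F_c against the root above
  it, which forces 2 P(c) \<le> P* and the lower bound.
*)

theory Submission
  imports Defs
begin

subsection \<open>Enumerations sorted by a key\<close>

definition sorted_enum :: "('a \<Rightarrow> 'b::linorder) \<Rightarrow> 'a set \<Rightarrow> (nat \<Rightarrow> 'a) \<Rightarrow> bool" where
  "sorted_enum f A a \<longleftrightarrow> bij_betw a {1..card A} A \<and>
     (\<forall>i j. 1 \<le> i \<and> i < j \<and> j \<le> card A \<longrightarrow> f (a i) < f (a j))"

lemma sorted_enum_exists:
  assumes fin: "finite A" and inj: "inj_on f A"
  shows "\<exists>a. sorted_enum f A a"
proof -
  define xs where "xs = sorted_list_of_set (f ` A)"
  have sorted_xs: "sorted_wrt (<) xs" and set_xs: "set xs = f ` A"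
    unfolding xs_def using fin by simp_all
  have len: "length xs = card A"
    unfolding xs_def using card_image[OF inj] by simp
  have shift: "bij_betw (\<lambda>i. i - 1) {1..card A} {..<card A}"
    by (rule bij_betw_byWitness[where f' = "\<lambda>i. i + 1"]) auto
  have nth: "bij_betw ((!) xs) {..<card A} (f ` A)"
    using bij_betw_nth[OF _ _ set_xs[symmetric]] len by (simp add: xs_def)
  have inv: "bij_betw (inv_into A f) (f ` A) A"
    using bij_betw_inv_into[OF inj_on_imp_bij_betw[OF inj]] .
  have "bij_betw (\<lambda>i. inv_into A f (xs ! (i - 1))) {1..card A} A"
    using bij_betw_trans[OF bij_betw_trans[OF shift nth] inv] by (simp add: comp_def)
  moreover have "f (inv_into A f (xs ! (i - 1))) < f (inv_into A f (xs ! (j - 1)))"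
    if "1 \<le> i" "i < j" "j \<le> card A" for i j
  proof -
    have "xs ! (i - 1) \<in> f ` A" "xs ! (j - 1) \<in> f ` A"
      using that len set_xs[symmetric] by auto
    moreover have "xs ! (i - 1) < xs ! (j - 1)"
      using sorted_wrt_nth_less[OF sorted_xs] that len by simp
    ultimately show ?thesis
      by (simp add: f_inv_into_f)
  qed
  ultimately show ?thesis
    unfolding sorted_enum_def by blast
qed

lemma sorted_enum_less_iff:
  assumes "sorted_enum f A a" "i \<in> {1..card A}" "j \<in> {1..card A}"
  shows "f (a i) < f (a j) \<longleftrightarrow> i < j"
  using assms unfolding sorted_enum_def
  by (cases i j rule: linorder_cases) (auto dest: less_asym)

lemma sorted_enum_obtain:
  assumes "sorted_enum f A a" "y \<in> A"
  obtains i where "i \<in> {1..card A}" "a i = y"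
proof -
  have "y \<in> a ` {1..card A}"
    using assms unfolding sorted_enum_def bij_betw_def by simp
  with that show thesis
    by blast
qed

lemma sorted_enum_in: "sorted_enum f A a \<Longrightarrow> i \<in> {1..card A} \<Longrightarrow> a i \<in> A"
  unfolding sorted_enum_def bij_betw_def by blast

lemma sorted_enum_first_le:
  assumes enum: "sorted_enum f A a" and "y \<in> A"
  shows "f (a 1) \<le> f y"
proof -
  obtain i where i: "i \<in> {1..card A}" "a i = y"
    using sorted_enum_obtain[OF assms] .
  then have "1 \<in> {1..card A}"
    by simp
  with i show ?thesis
    using sorted_enum_less_iff[OF enum, of 1 i] by (cases "i = 1") auto
qed

lemma sorted_enum_last:
  assumes enum: "sorted_enum f A a" and "y \<in> A" and greatest: "\<And>x. x \<in> A \<Longrightarrow> f x \<le> f y"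
  shows "a (card A) = y"
proof -
  obtain j where j: "j \<in> {1..card A}" "a j = y"
    using sorted_enum_obtain[OF enum \<open>y \<in> A\<close>] .
  then have k: "card A \<in> {1..card A}"
    by simp
  have "\<not> j < card A"
    using sorted_enum_less_iff[OF enum j(1) k] greatest[OF sorted_enum_in[OF enum k]] j(2)
    by (meson leD)
  with j show ?thesis
    by simp
qed

lemma sorted_enum_prev:
  assumes enum: "sorted_enum f A a" and i: "1 < i" "i \<le> card A" and "y \<in> A"
    and between: "f (a (i - 1)) \<le> f y" "f y < f (a i)"
  shows "y = a (i - 1)"
proof -
  obtain j where j: "j \<in> {1..card A}" "a j = y"
    using sorted_enum_obtain[OF enum \<open>y \<in> A\<close>] .
  have i': "i \<in> {1..card A}" "i - 1 \<in> {1..card A}"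
    using i by auto
  have "j < i"
    using sorted_enum_less_iff[OF enum j(1) i'(1)] between(2) j(2) by simp
  moreover have "\<not> j < i - 1"
    using sorted_enum_less_iff[OF enum j(1) i'(2)] between(1) j(2) by (meson leD)
  ultimately have "j = i - 1"
    by linarith
  with j(2) show ?thesis
    by simp
qed

subsection \<open>Reachability in a forest\<close>

lemma forestD:
  assumes "forest N E"
  shows "finite N" "E \<subseteq> N \<times> N" "acyclic E" "(x, y) \<in> E \<Longrightarrow> (x, z) \<in> E \<Longrightarrow> y = z"
  using assms unfolding forest_def by blast+

lemma forest_finite_edges: "forest N E \<Longrightarrow> finite E"
  using forestD(1,2) by (metis finite_SigmaI finite_subset)

lemma forest_rtrancl_closed:
  assumes "forest N E" "(u, v) \<in> E\<^sup>*" "u \<in> N"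
  shows "v \<in> N"
  using assms(2,3) by induction (use forestD(2)[OF assms(1)] in auto)

lemma forest_rtrancl_antisym:
  assumes "forest N E" "(u, v) \<in> E\<^sup>*" "(v, u) \<in> E\<^sup>*"
  shows "u = v"
proof (rule ccontr)
  assume "u \<noteq> v"
  with assms(2) have "(u, v) \<in> E\<^sup>+"
    by (meson rtranclD)
  with assms(3) have "(u, u) \<in> E\<^sup>+"
    by simp
  with forestD(3)[OF assms(1)] show False
    unfolding acyclic_def by blast
qed

lemma forest_edge_neq: "forest N E \<Longrightarrow> (u, v) \<in> E \<Longrightarrow> u \<noteq> v"
  using forestD(3) unfolding acyclic_def by blast

lemma forest_rtrancl_comparable:
  assumes F: "forest N E"
  shows "(y, a) \<in> E\<^sup>* \<Longrightarrow> (y, b) \<in> E\<^sup>* \<Longrightarrow> (a, b) \<in> E\<^sup>* \<or> (b, a) \<in> E\<^sup>*"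
proof (induction arbitrary: b rule: converse_rtrancl_induct)
  case base
  then show ?case
    by simp
next
  case (step y y')
  show ?case
  proof (cases "y = b")
    case True
    with step.hyps show ?thesis
      by (meson converse_rtrancl_into_rtrancl)
  next
    case False
    then obtain y'' where "(y, y'') \<in> E" "(y'', b) \<in> E\<^sup>*"
      using step.prems by (meson converse_rtranclE)
    with step.hyps(1) forestD(4)[OF F] step.IH show ?thesis
      by blast
  qed
qed

lemma forest_rtrancl_edge:
  assumes F: "forest N E" and "(c, z) \<in> E\<^sup>*" "c \<noteq> z" "(c, x) \<in> E"
  shows "(x, z) \<in> E\<^sup>*"
proof -
  obtain y where "(c, y) \<in> E" "(y, z) \<in> E\<^sup>*"
    using assms(2,3) by (meson converse_rtranclE)
  with forestD(4)[OF F] assms(4) show ?thesis by blast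
qed

lemma roots_subset: "roots N E \<subseteq> N"
  unfolding roots_def by auto

lemma root_rtrancl_eq: "r \<in> roots N E \<Longrightarrow> (r, v) \<in> E\<^sup>* \<Longrightarrow> v = r"
  unfolding roots_def by (auto elim: converse_rtranclE)

lemma root_exists:
  assumes F: "forest N E" and "x \<in> N"
  shows "\<exists>r\<in>roots N E. (x, r) \<in> E\<^sup>*"
proof -
  have "wf (E\<inverse>)"
    using finite_acyclic_wf_converse forest_finite_edges[OF F] forestD(3)[OF F] by blast
  then show ?thesis
    using \<open>x \<in> N\<close>
  proof (induction x)
    case (less x)
    show ?case
    proof (cases "\<exists>y. (x, y) \<in> E")
      case True
      then obtain y where "(x, y) \<in> E" by blast
      moreover have "y \<in> N"
        using \<open>(x, y) \<in> E\<close> forestD(2)[OF F] by blast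
      ultimately show ?thesis
        using less.IH by (meson converse_iff converse_rtrancl_into_rtrancl)
    qed (use less in \<open>auto simp: roots_def\<close>)
  qed
qed

lemma subtree_finite: "forest N E \<Longrightarrow> finite (subtree N E x)"
  unfolding subtree_def using forestD(1) by force

lemma subtree_mono: "(u, v) \<in> E\<^sup>* \<Longrightarrow> subtree N E u \<subseteq> subtree N E v"
  unfolding subtree_def by auto

lemma progeny_pos:
  assumes "forest N E" "x \<in> N"
  shows "0 < progeny N E x"
proof -
  have "x \<in> subtree N E x"
    using assms(2) by (simp add: subtree_def)
  then show ?thesis
    unfolding progeny_def using subtree_finite[OF assms(1)] card_gt_0_iff by blast
qed

lemma progeny_mono: "forest N E \<Longrightarrow> (u, v) \<in> E\<^sup>* \<Longrightarrow> progeny N E u \<le> progeny N E v"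
  unfolding progeny_def by (simp add: card_mono subtree_finite subtree_mono)

lemma progeny_strict_mono:
  assumes F: "forest N E" and "(u, v) \<in> E\<^sup>*" "u \<noteq> v" "u \<in> N"
  shows "progeny N E u < progeny N E v"
proof -
  have "v \<in> subtree N E v"
    using forest_rtrancl_closed[OF F assms(2,4)] by (simp add: subtree_def)
  moreover have "v \<notin> subtree N E u"
    using forest_rtrancl_antisym[OF F assms(2)] assms(3) by (auto simp: subtree_def)
  ultimately have "subtree N E u \<subset> subtree N E v"
    using subtree_mono[OF assms(2)] by blast
  then show ?thesis
    unfolding progeny_def by (simp add: psubset_card_mono subtree_finite[OF F])
qed

text \<open>Two incomparable vertices below \<open>x\<close> have disjoint subtrees, neither of which contains \<open>x\<close>.\<close>

lemma progeny_add_less: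
  assumes F: "forest N E" and "(y, x) \<in> E\<^sup>*" "(z, x) \<in> E\<^sup>*" "(y, z) \<notin> E\<^sup>*" "(z, y) \<notin> E\<^sup>*"
  shows "progeny N E y + progeny N E z < progeny N E x"
proof -
  let ?S = "subtree N E y \<union> subtree N E z"
  have disjoint: "subtree N E y \<inter> subtree N E z = {}"
    using forest_rtrancl_comparable[OF F] assms(4,5) by (auto simp: subtree_def)
  have "y \<noteq> x"
    using assms(3,5) by blast
  with assms(2) have "(y, x) \<in> E\<^sup>+"
    by (meson rtranclD)
  then obtain w where "(w, x) \<in> E"
    using tranclD2 by metis
  then have "x \<in> N"
    using forestD(2)[OF F] by blast
  moreover have "x \<notin> ?S"
  proof
    assume "x \<in> ?S"
    then have "(x, y) \<in> E\<^sup>* \<or> (x, z) \<in> E\<^sup>*"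
      by (auto simp: subtree_def)
    then show False
    proof
      assume "(x, y) \<in> E\<^sup>*"
      then show False
        using forest_rtrancl_antisym[OF F assms(2)] assms(3,5) by simp
    next
      assume "(x, z) \<in> E\<^sup>*"
      then show False
        using forest_rtrancl_antisym[OF F assms(3)] assms(2,4) by simp
    qed
  qed
  ultimately have "insert x ?S \<subseteq> subtree N E x"
    using subtree_mono[OF assms(2)] subtree_mono[OF assms(3)] by (auto simp: subtree_def)
  then have "card (insert x ?S) \<le> progeny N E x"
    unfolding progeny_def by (simp add: card_mono subtree_finite[OF F])
  moreover have "card (insert x ?S) = Suc (progeny N E y + progeny N E z)"
    using \<open>x \<notin> ?S\<close> disjoint by (simp add: progeny_def card_Un_disjoint subtree_finite[OF F])
  ultimately show ?thesis by simp
qed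

subsection \<open>Cutting the out-edge of a vertex\<close>

lemma cut_subset: "cut E x \<subseteq> E"
  unfolding cut_def by auto

lemma forest_cut:
  assumes "forest N E"
  shows "forest N (cut E x)"
proof -
  have "acyclic (cut E x)"
    using acyclic_subset[OF forestD(3)[OF assms] cut_subset] .
  moreover have "cut E x \<subseteq> N \<times> N"
    using cut_subset forestD(2)[OF assms] by (rule subset_trans)
  moreover have "\<forall>u y z. (u, y) \<in> cut E x \<and> (u, z) \<in> cut E x \<longrightarrow> y = z"
    unfolding cut_def using forestD(4)[OF assms] by blast
  ultimately show ?thesis
    using forestD(1)[OF assms] unfolding forest_def by (intro conjI)
qed

lemma rtrancl_cut_subset: "(y, z) \<in> (cut E x)\<^sup>* \<Longrightarrow> (y, z) \<in> E\<^sup>*"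
  using subsetD[OF rtrancl_mono[OF cut_subset[of E x]]] .

lemma roots_cut: "x \<in> N \<Longrightarrow> roots N (cut E x) = insert x (roots N E)"
  unfolding roots_def cut_def by auto

lemma cut_root: "x \<in> roots N E \<Longrightarrow> cut E x = E"
  unfolding roots_def cut_def by auto

lemma cut_cut: "cut (cut E x) x = cut E x"
  unfolding cut_def by auto

lemma rtrancl_cut_imp:
  assumes F: "forest N E" and "(y, z) \<in> (cut E x)\<^sup>*"
  shows "\<not> ((y, x) \<in> E\<^sup>* \<and> (x, z) \<in> E\<^sup>* \<and> x \<noteq> z)"
  using assms(2)
proof (induction rule: rtrancl_induct)
  case base
  then show ?case
    using forest_rtrancl_antisym[OF F, of y x] by blast
next
  case (step z w)
  have "(z, w) \<in> E" "z \<noteq> x"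
    using step.hyps(2) by (auto simp: cut_def)
  show ?case
  proof
    assume through: "(y, x) \<in> E\<^sup>* \<and> (x, w) \<in> E\<^sup>* \<and> x \<noteq> w"
    have "(x, z) \<notin> E\<^sup>*"
      using step.IH through \<open>z \<noteq> x\<close> by blast
    moreover have "(y, z) \<in> E\<^sup>*"
      using rtrancl_cut_subset[OF step.hyps(1)] .
    ultimately have "(z, x) \<in> E\<^sup>*"
      using forest_rtrancl_comparable[OF F] through by blast
    then have "(w, x) \<in> E\<^sup>*"
      using forest_rtrancl_edge[OF F _ \<open>z \<noteq> x\<close> \<open>(z, w) \<in> E\<close>] by blast
    then show False
      using forest_rtrancl_antisym[OF F, of w x] through by blast
  qed
qed

lemma rtrancl_cut_if:
  assumes F: "forest N E"
  shows "(y, z) \<in> E\<^sup>* \<Longrightarrow> \<not> ((y, x) \<in> E\<^sup>* \<and> (x, z) \<in> E\<^sup>* \<and> x \<noteq> z) \<Longrightarrow> (y, z) \<in> (cut E x)\<^sup>*"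
proof (induction rule: converse_rtrancl_induct)
  case (step y y')
  have "y \<noteq> x"
  proof
    assume "y = x"
    with step have "z = x"
      by (meson converse_rtrancl_into_rtrancl rtrancl.rtrancl_refl)
    with step.hyps \<open>y = x\<close> have "(y', y) \<in> E\<^sup>*" "(y, y') \<in> E\<^sup>*"
      by auto
    then show False
      using forest_rtrancl_antisym[OF F] forest_edge_neq[OF F step.hyps(1)] by blast
  qed
  with step.hyps(1) have "(y, y') \<in> cut E x"
    by (simp add: cut_def)
  moreover have "(y', z) \<in> (cut E x)\<^sup>*"
    using step by (meson converse_rtrancl_into_rtrancl)
  ultimately show ?case
    by (rule converse_rtrancl_into_rtrancl)
qed simp

lemma rtrancl_cut_iff:
  assumes F: "forest N E"
  shows "(y, z) \<in> (cut E x)\<^sup>* \<longleftrightarrow> (y, z) \<in> E\<^sup>* \<and> \<not> ((y, x) \<in> E\<^sup>* \<and> (x, z) \<in> E\<^sup>* \<and> x \<noteq> z)"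
  using rtrancl_cut_imp[OF F, of y z x] rtrancl_cut_if[OF F, of y z x] rtrancl_cut_subset[of y z E x]
  by blast

lemma progeny_cut:
  assumes F: "forest N E"
  shows "progeny N (cut E x) z =
    (if (x, z) \<in> E\<^sup>* \<and> x \<noteq> z then progeny N E z - progeny N E x else progeny N E z)"
proof (cases "(x, z) \<in> E\<^sup>* \<and> x \<noteq> z")
  case True
  then have "subtree N (cut E x) z = subtree N E z - subtree N E x"
    unfolding subtree_def using rtrancl_cut_iff[OF F] by auto
  moreover have "subtree N E x \<subseteq> subtree N E z"
    using subtree_mono[of x z E N] True by blast
  ultimately show ?thesis
    using True unfolding progeny_def by (simp add: card_Diff_subset subtree_finite[OF F])
next
  case False
  then have "subtree N (cut E x) z = subtree N E z"
    unfolding subtree_def using rtrancl_cut_iff[OF F] by auto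
  with False show ?thesis
    unfolding progeny_def if_not_P[OF False] by simp
qed

lemma progeny_cut_self: "forest N E \<Longrightarrow> progeny N (cut E x) x = progeny N E x"
  by (simp add: progeny_cut)

lemma progeny_cut_below:
  assumes "forest N E" "(c, x) \<in> E\<^sup>*"
  shows "progeny N (cut E x) c = progeny N E c"
  using forest_rtrancl_antisym[OF assms] by (auto simp: progeny_cut[OF assms(1)])

subsection \<open>The root \<open>r\<^sub>1\<close> and the set \<open>A\<close>\<close>

lemma r1_eqI:
  assumes "r \<in> roots N E" "\<forall>r'\<in>roots N E. r' \<noteq> r \<longrightarrow> succ_prog N E r r'"
  shows "r1 N E = r"
  unfolding r1_def
proof (rule the_equality)
  fix s
  assume s: "s \<in> roots N E \<and> (\<forall>r'\<in>roots N E. r' \<noteq> s \<longrightarrow> succ_prog N E s r')"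
  show "s = r"
  proof (rule ccontr)
    assume "s \<noteq> r"
    then have "succ_prog N E s r" "succ_prog N E r s"
      using s assms by auto
    then show False
      unfolding succ_prog_def by auto
  qed
qed (use assms in blast)

lemma ex_greatest_root:
  assumes F: "forest N E" and "N \<noteq> {}"
  shows "\<exists>r\<in>roots N E. \<forall>r'\<in>roots N E. r' \<noteq> r \<longrightarrow> succ_prog N E r r'"
proof -
  have fin: "finite (roots N E)"
    using finite_subset[OF roots_subset forestD(1)[OF F]] .
  have "roots N E \<noteq> {}"
    using root_exists[OF F] assms(2) by blast
  define M where "M = Max (progeny N E ` roots N E)"
  define S where "S = {r \<in> roots N E. progeny N E r = M}"
  have "M \<in> progeny N E ` roots N E"
    unfolding M_def using fin \<open>roots N E \<noteq> {}\<close> by simp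
  then have "S \<noteq> {}" "finite S"
    unfolding S_def using fin by auto
  then have "Min S \<in> S"
    by simp
  moreover have "succ_prog N E (Min S) r'" if "r' \<in> roots N E" "r' \<noteq> Min S" for r'
  proof -
    have "progeny N E r' \<le> M"
      unfolding M_def using fin that(1) by simp
    moreover have "progeny N E r' = M \<Longrightarrow> Min S \<le> r'"
      using \<open>finite S\<close> that(1) by (simp add: S_def)
    ultimately show ?thesis
      using \<open>Min S \<in> S\<close> that(2) unfolding succ_prog_def S_def by auto
  qed
  ultimately show ?thesis
    unfolding S_def by blast
qed

lemma r1_in_roots: "forest N E \<Longrightarrow> N \<noteq> {} \<Longrightarrow> r1 N E \<in> roots N E"
  using ex_greatest_root r1_eqI by metis

lemma r1_succ_prog:
  "forest N E \<Longrightarrow> N \<noteq> {} \<Longrightarrow> r \<in> roots N E \<Longrightarrow> r \<noteq> r1 N E \<Longrightarrow> succ_prog N E (r1 N E) r"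
  using ex_greatest_root r1_eqI by metis

lemma Aset_subset: "Aset N E \<subseteq> N"
  unfolding Aset_def by auto

lemma finite_Aset: "forest N E \<Longrightarrow> finite (Aset N E)"
  using finite_subset[OF Aset_subset forestD(1)] .

lemma Aset_iff:
  assumes F: "forest N E" and x: "x \<in> N"
  shows "x \<in> Aset N E \<longleftrightarrow> (\<forall>r\<in>roots N E. r \<noteq> x \<longrightarrow> succ_prog N (cut E x) x r)"
proof
  assume "x \<in> Aset N E"
  then have "r1 N (cut E x) = x"
    unfolding Aset_def by simp
  then show "\<forall>r\<in>roots N E. r \<noteq> x \<longrightarrow> succ_prog N (cut E x) x r"
    using r1_succ_prog[OF forest_cut[OF F]] x roots_cut[OF x] by force
next
  assume "\<forall>r\<in>roots N E. r \<noteq> x \<longrightarrow> succ_prog N (cut E x) x r"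
  then have "r1 N (cut E x) = x"
    using roots_cut[OF x] by (intro r1_eqI) auto
  then show "x \<in> Aset N E"
    unfolding Aset_def using x by simp
qed

lemma Aset_succ_prog:
  "forest N E \<Longrightarrow> x \<in> Aset N E \<Longrightarrow> r \<in> roots N E \<Longrightarrow> r \<noteq> x \<Longrightarrow> succ_prog N (cut E x) x r"
  using Aset_iff Aset_subset by blast

lemma Aset_root_eq_r1: "x \<in> roots N E \<Longrightarrow> x \<in> Aset N E \<Longrightarrow> x = r1 N E"
  unfolding Aset_def by (simp add: cut_root)

lemma r1_in_Aset: "forest N E \<Longrightarrow> N \<noteq> {} \<Longrightarrow> r1 N E \<in> Aset N E"
  using r1_in_roots roots_subset cut_root unfolding Aset_def by fastforce

lemma Aset_progeny_le_double:
  assumes F: "forest N E" and c: "c \<in> Aset N E" and "(c, z) \<in> E\<^sup>*" "c \<noteq> z"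
  shows "progeny N E z \<le> 2 * progeny N E c"
proof -
  have "c \<in> N"
    using c Aset_subset by blast
  then obtain r where r: "r \<in> roots N E" "(z, r) \<in> E\<^sup>*"
    using root_exists[OF F] forest_rtrancl_closed[OF F assms(3)] by blast
  have cr: "(c, r) \<in> E\<^sup>*"
    using assms(3) r(2) by simp
  have "c \<noteq> r"
    using root_rtrancl_eq[OF r(1)] assms(3,4) r(2) by blast
  then have "succ_prog N (cut E c) c r"
    using Aset_succ_prog[OF F c r(1)] by simp
  then have "progeny N E r \<le> 2 * progeny N E c"
    using cr \<open>c \<noteq> r\<close> unfolding succ_prog_def by (auto simp: progeny_cut[OF F])
  then show ?thesis
    using progeny_mono[OF F r(2)] by simp
qed

lemma Aset_below_r1:
  assumes F: "forest N E" and xA: "x \<in> Aset N E"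
  shows "(x, r1 N E) \<in> E\<^sup>*"
proof (rule ccontr)
  assume not_below: "(x, r1 N E) \<notin> E\<^sup>*"
  have x: "x \<in> N"
    using xA Aset_subset by blast
  then obtain r where r: "r \<in> roots N E" "(x, r) \<in> E\<^sup>*"
    using root_exists[OF F] by blast
  have "x \<noteq> r"
    using Aset_root_eq_r1[of x N E] r xA not_below by auto
  then have "progeny N E x < progeny N E r"
    using progeny_strict_mono[OF F r(2) _ x] by simp
  also have "progeny N E r \<le> progeny N E (r1 N E)"
    using r1_succ_prog[OF F _ r(1)] x r not_below unfolding succ_prog_def by fastforce
  also have "progeny N E (r1 N E) \<le> progeny N E x"
    using Aset_succ_prog[OF F xA r1_in_roots[OF F]] x not_below
    unfolding succ_prog_def by (fastforce simp: progeny_cut[OF F])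
  finally show False
    by simp
qed

lemma Aset_upward_closed:
  assumes F: "forest N E" and yA: "y \<in> Aset N E" and yc: "(y, c) \<in> E\<^sup>*"
  shows "c \<in> Aset N E"
proof (cases "y = c")
  case False
  have y: "y \<in> N"
    using yA Aset_subset by blast
  have c: "c \<in> N"
    using forest_rtrancl_closed[OF F yc y] .
  have less: "progeny N E y < progeny N E c"
    using progeny_strict_mono[OF F yc False y] .
  have "y \<notin> roots N E"
    using root_rtrancl_eq yc False by metis
  show ?thesis
    unfolding Aset_iff[OF F c]
  proof (intro ballI impI)
    fix r
    assume r: "r \<in> roots N E" "r \<noteq> c"
    have "y \<noteq> r"
      using r(1) \<open>y \<notin> roots N E\<close> by blast
    have y_wins: "succ_prog N (cut E y) y r"
      using Aset_succ_prog[OF F yA r(1) \<open>y \<noteq> r\<close>[symmetric]] .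
    have "(y, r) \<in> E\<^sup>* \<longleftrightarrow> (c, r) \<in> E\<^sup>*"
      using forest_rtrancl_comparable[OF F yc] root_rtrancl_eq[OF r(1)] r(2) yc
      by (metis rtrancl_trans)
    then show "succ_prog N (cut E c) c r"
      using y_wins less \<open>y \<noteq> r\<close> r(2) unfolding succ_prog_def
      by (auto simp: progeny_cut[OF F] split: if_splits)
  qed
qed (use yA in simp)

lemma Aset_chain:
  assumes F: "forest N E" and xA: "x \<in> Aset N E" and yA: "y \<in> Aset N E"
  shows "(x, y) \<in> E\<^sup>* \<or> (y, x) \<in> E\<^sup>*"
proof (rule ccontr)
  assume incomparable: "\<not> ((x, y) \<in> E\<^sup>* \<or> (y, x) \<in> E\<^sup>*)"
  let ?r = "r1 N E"
  have "(x, ?r) \<in> E\<^sup>*" "(y, ?r) \<in> E\<^sup>*"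
    using Aset_below_r1[OF F] xA yA by blast+
  moreover have "x \<noteq> ?r" "y \<noteq> ?r"
    using incomparable calculation by auto
  ultimately have "progeny N E ?r \<le> 2 * progeny N E x" "progeny N E ?r \<le> 2 * progeny N E y"
    using Aset_progeny_le_double[OF F] xA yA by blast+
  moreover have "progeny N E x + progeny N E y < progeny N E ?r"
    using progeny_add_less[OF F \<open>(x, ?r) \<in> E\<^sup>*\<close> \<open>(y, ?r) \<in> E\<^sup>*\<close>] incomparable by blast
  ultimately show False
    by simp
qed

lemma succ_prog_mono:
  assumes "succ_prog N E c r" "progeny N E c \<le> progeny N E' c" "progeny N E' r \<le> progeny N E r"
  shows "succ_prog N E' c r"
  using assms unfolding succ_prog_def by auto

lemma progeny_cut_le: "forest N E \<Longrightarrow> progeny N (cut E x) z \<le> progeny N E z"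
  by (simp add: progeny_cut)

lemma cut_commute: "cut (cut E x) y = cut (cut E y) x"
  unfolding cut_def by auto

lemma Punder_eq:
  assumes F: "forest N E" and cA: "c \<in> Aset N E" and cx: "(c, x) \<in> E"
  shows "Punder N E x = progeny N E c"
  unfolding Punder_def
proof (rule Max_eqI)
  have "c \<noteq> x"
    using forest_edge_neq[OF F cx] .
  moreover have "c \<in> N"
    using cA Aset_subset by blast
  ultimately have "c \<in> subtree N E x - {x}"
    using cx by (simp add: subtree_def)
  then show "progeny N E c \<in> progeny N E ` (subtree N E x - {x})"
    by (rule imageI)
  have x_le: "progeny N E x \<le> 2 * progeny N E c"
    using Aset_progeny_le_double[OF F cA] cx \<open>c \<noteq> x\<close> by blast
  fix p
  assume "p \<in> progeny N E ` (subtree N E x - {x})"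
  then obtain z where z: "(z, x) \<in> E\<^sup>*" "z \<noteq> x" and p: "p = progeny N E z"
    by (auto simp: subtree_def)
  show "p \<le> progeny N E c"
  proof (cases "(z, c) \<in> E\<^sup>*")
    case True
    then show ?thesis
      using progeny_mono[OF F] p by blast
  next
    case False
    have "(c, z) \<notin> E\<^sup>*"
    proof
      assume "(c, z) \<in> E\<^sup>*"
      then have "(x, z) \<in> E\<^sup>*"
        using False forest_rtrancl_edge[OF F _ _ cx] by blast
      then show False
        using forest_rtrancl_antisym[OF F z(1)] z(2) by blast
    qed
    then have "progeny N E z + progeny N E c < progeny N E x"
      using progeny_add_less[OF F z(1) _ False] cx by blast
    with x_le p show ?thesis
      by simp
  qed
qed (simp add: subtree_finite[OF F])

text \<open>Cuts commute and never increase progeny, so the wins of \<open>c\<close> in \<open>F\<^sub>c\<close> persist in \<open>(F\<^sub>x)\<^sub>c\<close>;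
  the new root \<open>x\<close> loses because \<open>P(x) < P(R) \<le> 2 P(c)\<close> for the root \<open>R\<close> above it.\<close>

lemma Aset_cut_above:
  assumes F: "forest N E" and cA: "c \<in> Aset N E" and cx: "(c, x) \<in> E\<^sup>*" "c \<noteq> x"
  shows "c \<in> Aset N (cut E x)"
proof -
  have c: "c \<in> N" and x: "x \<in> N"
    using cA Aset_subset forest_rtrancl_closed[OF F cx(1)] by blast+
  have c_kept: "progeny N (cut (cut E x) c) c = progeny N E c"
    using progeny_cut_below[OF F cx(1)] by (simp add: progeny_cut_self forest_cut[OF F])
  have "succ_prog N (cut (cut E x) c) c r" if r: "r \<in> roots N (cut E x)" "r \<noteq> c" for r
  proof (cases "r \<in> roots N E")
    case True
    have "progeny N (cut (cut E c) x) r \<le> progeny N (cut E c) r"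
      using progeny_cut_le[OF forest_cut[OF F]] .
    then show ?thesis
      using succ_prog_mono[OF Aset_succ_prog[OF F cA True r(2)]] c_kept
      by (simp add: cut_commute progeny_cut_self F)
  next
    case False
    then have "r = x"
      using r(1) roots_cut[OF x] by blast
    obtain R where R: "R \<in> roots N E" "(x, R) \<in> E\<^sup>*"
      using root_exists[OF F x] by blast
    have "x \<noteq> R"
      using False R(1) \<open>r = x\<close> by blast
    then have "progeny N E x < progeny N E R"
      using progeny_strict_mono[OF F R(2) _ x] by blast
    moreover have "progeny N E R \<le> 2 * progeny N E c"
      using Aset_progeny_le_double[OF F cA, of R] cx R(2) \<open>x \<noteq> R\<close>
      by (metis forest_rtrancl_antisym[OF F] rtrancl_trans)
    ultimately have "progeny N E x - progeny N E c < progeny N E c"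
      by linarith
    moreover have "(c, x) \<in> (cut E x)\<^sup>*"
      using cx rtrancl_cut_iff[OF F] by blast
    ultimately show ?thesis
      using c_kept \<open>r = x\<close> cx(2) progeny_cut_below[OF F cx(1)]
      unfolding succ_prog_def by (simp add: progeny_cut F forest_cut)
  qed
  then show ?thesis
    using Aset_iff[OF forest_cut[OF F] c] roots_cut[OF x] by blast
qed

subsection \<open>Values of the mechanism\<close>

lemma Mf_eq_Mroot_cut: "Mf N E x = Mroot N (cut E x) x"
  unfolding Mf_def by (simp add: cut_root)

lemma Mf_eq_zero: "x \<in> N \<Longrightarrow> x \<notin> Aset N E \<Longrightarrow> Mf N E x = 0"
  unfolding Mf_eq_Mroot_cut Mroot_def Aset_def by simp

lemma Mf_eq_half: "x \<in> Aset N E \<Longrightarrow> card (Aset N (cut E x)) = 1 \<Longrightarrow> Mf N E x = 1/2"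
  unfolding Mf_eq_Mroot_cut Mroot_def Aset_def by simp

lemma ex_child_in_Aset_cut:
  assumes F: "forest N E" and xA: "x \<in> Aset N E" and "card (Aset N (cut E x)) \<noteq> 1"
  shows "\<exists>c. (c, x) \<in> E \<and> c \<in> Aset N (cut E x)"
proof -
  let ?E' = "cut E x"
  have F': "forest N ?E'"
    using forest_cut[OF F] .
  have "x \<in> Aset N ?E'"
    using xA unfolding Aset_def by (simp add: cut_cut)
  moreover have "Aset N ?E' \<noteq> {x}"
    using assms(3) by auto
  ultimately obtain d where d: "d \<in> Aset N ?E'" "d \<noteq> x"
    by blast
  have "r1 N ?E' = x"
    using xA unfolding Aset_def by simp
  then have "(d, x) \<in> ?E'\<^sup>+"
    using Aset_below_r1[OF F' d(1)] d(2) by (simp add: rtrancl_eq_or_trancl)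
  then obtain c where "(d, c) \<in> ?E'\<^sup>*" "(c, x) \<in> ?E'"
    using tranclD2 by metis
  then show ?thesis
    using Aset_upward_closed[OF F' d(1)] cut_subset[of E x] by blast
qed

lemma Mf_eq_log_child:
  assumes F: "forest N E" and xA: "x \<in> Aset N E" and cA: "c \<in> Aset N (cut E x)" and cx: "(c, x) \<in> E"
  shows "Mf N E x = 1/2 * log 2 (real (progeny N E x) / real (progeny N E c))"
proof -
  let ?E' = "cut E x"
  have "c \<noteq> x"
    using forest_edge_neq[OF F cx] .
  then have cx': "(c, x) \<in> ?E'"
    using cx by (simp add: cut_def)
  have "x \<in> Aset N ?E'"
    using xA unfolding Aset_def by (simp add: cut_cut)
  then have "card {x, c} \<le> card (Aset N ?E')"
    using cA by (intro card_mono[OF finite_Aset[OF forest_cut[OF F]]]) auto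
  then have "card (Aset N ?E') \<noteq> 1"
    using \<open>c \<noteq> x\<close> by simp
  moreover have "r1 N ?E' = x"
    using xA unfolding Aset_def by simp
  moreover have "Punder N ?E' x = progeny N E c"
    using Punder_eq[OF forest_cut[OF F] cA cx'] progeny_cut_below[OF F r_into_rtrancl[OF cx]] by simp
  ultimately show ?thesis
    unfolding Mf_eq_Mroot_cut Mroot_def by (simp add: progeny_cut_self F)
qed

lemma progeny_le_double_child:
  assumes F: "forest N E" and cA: "c \<in> Aset N (cut E x)" and cx: "(c, x) \<in> E"
  shows "progeny N E x \<le> 2 * progeny N E c"
proof -
  have "c \<noteq> x"
    using forest_edge_neq[OF F cx] .
  with cx have "(c, x) \<in> cut E x"
    by (simp add: cut_def)
  have "progeny N (cut E x) x \<le> 2 * progeny N (cut E x) c"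
    using Aset_progeny_le_double[OF forest_cut[OF F] cA r_into_rtrancl[OF \<open>(c, x) \<in> cut E x\<close>] \<open>c \<noteq> x\<close>] .
  then show ?thesis
    using progeny_cut_below[OF F r_into_rtrancl[OF cx]] by (simp add: progeny_cut_self F)
qed

lemma progeny_le_Pstar:
  assumes "forest N E" "x \<in> N"
  shows "progeny N E x \<le> Pstar N E"
  unfolding Pstar_def using forestD(1)[OF assms(1)] assms(2) by (simp add: Max_ge)

text \<open>Only the root above \<open>c\<close> can have different progenies in \<open>F\<^sub>c\<close> and in \<open>(F\<^sub>x)\<^sub>c\<close>, so
  in \<open>F\<^sub>c\<close> the vertex \<open>c\<close> loses against that root, which therefore keeps at least \<open>P(c)\<close>.\<close>

lemma double_progeny_le_Pstar:
  assumes F: "forest N E" and cA': "c \<in> Aset N (cut E x)" and cx: "(c, x) \<in> E\<^sup>*"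
    and c_notin: "c \<notin> Aset N E"
  shows "2 * progeny N E c \<le> Pstar N E"
proof -
  have c: "c \<in> N"
    using subsetD[OF Aset_subset cA'] .
  then have x: "x \<in> N"
    using forest_rtrancl_closed[OF F cx] by blast
  obtain r where r: "r \<in> roots N E" "r \<noteq> c" and lost: "\<not> succ_prog N (cut E c) c r"
    using Aset_iff[OF F c] c_notin by blast
  have "(c, r) \<in> E\<^sup>*"
  proof (rule ccontr)
    assume "(c, r) \<notin> E\<^sup>*"
    then have "(x, r) \<notin> (cut E c)\<^sup>*"
      using cx rtrancl_cut_subset[of x r E c] by (meson rtrancl_trans)
    then have r_kept: "progeny N (cut (cut E x) c) r = progeny N (cut E c) r"
      by (simp add: cut_commute[of E x c] progeny_cut[OF forest_cut[OF F]])
    have c_kept: "progeny N (cut (cut E x) c) c = progeny N (cut E c) c"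
      using progeny_cut_below[OF F cx] by (simp add: progeny_cut_self forest_cut[OF F] F)
    have "r \<in> roots N (cut E x)"
      using r(1) roots_cut[OF x] by simp
    then have "succ_prog N (cut (cut E x) c) c r"
      using Aset_succ_prog[OF forest_cut[OF F] cA' _ r(2)] by blast
    with lost show False
      unfolding succ_prog_def r_kept c_kept by simp
  qed
  then have "\<not> progeny N E r - progeny N E c < progeny N E c"
    using lost r(2) unfolding succ_prog_def by (simp add: progeny_cut[OF F])
  then have "2 * progeny N E c \<le> progeny N E r"
    by linarith
  also have "\<dots> \<le> Pstar N E"
    using progeny_le_Pstar[OF F subsetD[OF roots_subset r(1)]] .
  finally show ?thesis .
qed

lemma Mf_Aset_cases:
  assumes F: "forest N E" and xA: "x \<in> Aset N E"
  obtains "Mf N E x = 1/2"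
  | c where "(c, x) \<in> E" "c \<in> Aset N (cut E x)"
      "Mf N E x = 1/2 * log 2 (real (progeny N E x) / real (progeny N E c))"
      "0 < progeny N E c" "progeny N E c < progeny N E x" "progeny N E x \<le> 2 * progeny N E c"
proof (cases "card (Aset N (cut E x)) = 1")
  case True
  then show thesis
    using that(1) Mf_eq_half[OF xA] by blast
next
  case False
  then obtain c where c: "(c, x) \<in> E" "c \<in> Aset N (cut E x)"
    using ex_child_in_Aset_cut[OF F xA] by blast
  moreover have "c \<in> N"
    using subsetD[OF Aset_subset c(2)] .
  ultimately show thesis
    using that(2) Mf_eq_log_child[OF F xA c(2,1)] progeny_le_double_child[OF F c(2,1)]
      progeny_pos[OF F] progeny_strict_mono[OF F r_into_rtrancl[OF c(1)] forest_edge_neq[OF F c(1)]]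
    by blast
qed

lemma Mf_Aset_pos:
  assumes "forest N E" "x \<in> Aset N E"
  shows "0 < Mf N E x"
  using assms
proof (cases rule: Mf_Aset_cases)
  case (2 c)
  then have "1 < real (progeny N E x) / real (progeny N E c)"
    by simp
  then have "0 < log 2 (real (progeny N E x) / real (progeny N E c))"
    by simp
  with 2 show ?thesis
    by linarith
qed simp

lemma Mf_Aset_le_half:
  assumes "forest N E" "x \<in> Aset N E"
  shows "Mf N E x \<le> 1/2"
  using assms
proof (cases rule: Mf_Aset_cases)
  case (2 c)
  then have "real (progeny N E x) / real (progeny N E c) \<le> 2"
    by (simp add: divide_le_eq)
  then have "log 2 (real (progeny N E x) / real (progeny N E c)) \<le> log 2 2"
    using 2 by (subst log_le_cancel_iff) auto
  with 2 show ?thesis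
    by simp
qed simp

lemma Mf_least_Aset_ge:
  assumes F: "forest N E" and xA: "x \<in> Aset N E"
    and least: "\<And>y. y \<in> Aset N E \<Longrightarrow> progeny N E x \<le> progeny N E y"
  shows "1/2 * log 2 (2 * real (progeny N E x) / real (Pstar N E)) \<le> Mf N E x"
proof -
  have x: "x \<in> N"
    using subsetD[OF Aset_subset xA] .
  have Px: "0 < progeny N E x" "progeny N E x \<le> Pstar N E"
    using progeny_pos[OF F x] progeny_le_Pstar[OF F x] .
  from F xA show ?thesis
  proof (cases rule: Mf_Aset_cases)
    case 1
    have "2 * real (progeny N E x) / real (Pstar N E) \<le> 2"
      using Px by (simp add: divide_le_eq)
    then have "log 2 (2 * real (progeny N E x) / real (Pstar N E)) \<le> log 2 2"
      using Px by (subst log_le_cancel_iff) auto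
    with 1 show ?thesis
      by simp
  next
    case (2 c)
    have "c \<notin> Aset N E"
      using least 2(5) by fastforce
    then have "2 * progeny N E c \<le> Pstar N E"
      using double_progeny_le_Pstar[OF F 2(2) r_into_rtrancl[OF 2(1)]] by blast
    then have "2 * real (progeny N E x) / real (Pstar N E)
        \<le> real (progeny N E x) / real (progeny N E c)"
      using Px 2(4) frac_le[of "real (progeny N E x)" "real (progeny N E x)"
          "real (progeny N E c)" "real (Pstar N E) / 2"]
      by (simp add: mult.commute)
    then have "log 2 (2 * real (progeny N E x) / real (Pstar N E))
        \<le> log 2 (real (progeny N E x) / real (progeny N E c))"
      using Px 2(4) by (subst log_le_cancel_iff) auto
    with 2(3) show ?thesis
      by simp
  qed
qed

lemma Mf_support:
  assumes F: "forest N E"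
  shows "{x \<in> N. Mf N E x \<noteq> 0} = Aset N E"
proof (intro equalityI subsetI)
  fix x
  assume "x \<in> {x \<in> N. Mf N E x \<noteq> 0}"
  then show "x \<in> Aset N E"
    using Mf_eq_zero by blast
next
  fix x
  assume "x \<in> Aset N E"
  then show "x \<in> {x \<in> N. Mf N E x \<noteq> 0}"
    using Mf_Aset_pos[OF F] subsetD[OF Aset_subset] by fastforce
qed

subsection \<open>The elements of \<open>A\<close> in order of progeny\<close>

lemma progeny_inj_on_Aset:
  assumes F: "forest N E"
  shows "inj_on (progeny N E) (Aset N E)"
proof (rule inj_onI, rule ccontr)
  fix x y
  assume A: "x \<in> Aset N E" "y \<in> Aset N E" and eq: "progeny N E x = progeny N E y" and "x \<noteq> y"
  then have "x \<in> N" "y \<in> N"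
    using subsetD[OF Aset_subset] by blast+
  then show False
    using Aset_chain[OF F A] progeny_strict_mono[OF F] eq \<open>x \<noteq> y\<close> by (metis less_irrefl)
qed

lemma Aset_rtrancl_of_progeny_less:
  assumes F: "forest N E" and A: "x \<in> Aset N E" "y \<in> Aset N E" and less: "progeny N E x < progeny N E y"
  shows "(x, y) \<in> E\<^sup>*"
  using Aset_chain[OF F A] progeny_mono[OF F, of y x] less by auto

lemma sorted_enum_Aset_edge:
  assumes F: "forest N E" and enum: "sorted_enum (progeny N E) (Aset N E) a"
    and i: "1 < i" "i \<le> card (Aset N E)"
  shows "(a (i - 1), a i) \<in> E"
proof -
  let ?c = "a (i - 1)" and ?x = "a i"
  have i': "i - 1 \<in> {1..card (Aset N E)}" "i \<in> {1..card (Aset N E)}"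
    using i by auto
  have A: "?c \<in> Aset N E" "?x \<in> Aset N E"
    using sorted_enum_in[OF enum i'(1)] sorted_enum_in[OF enum i'(2)] .
  have less: "progeny N E ?c < progeny N E ?x"
    using sorted_enum_less_iff[OF enum i'] i by simp
  then have "(?c, ?x) \<in> E\<^sup>+"
    using Aset_rtrancl_of_progeny_less[OF F A less] by (auto simp: rtrancl_eq_or_trancl)
  then obtain d where d: "(?c, d) \<in> E\<^sup>*" "(d, ?x) \<in> E"
    using tranclD2 by metis
  have "d \<in> Aset N E"
    using Aset_upward_closed[OF F A(1) d(1)] .
  moreover have "progeny N E d < progeny N E ?x"
    using progeny_strict_mono[OF F r_into_rtrancl[OF d(2)] forest_edge_neq[OF F d(2)]]
      subsetD[OF Aset_subset \<open>d \<in> Aset N E\<close>] .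
  ultimately have "d = ?c"
    using sorted_enum_prev[OF enum i] progeny_mono[OF F d(1)] by blast
  with d(2) show ?thesis
    by simp
qed

lemma Mf_sorted_enum_step:
  assumes F: "forest N E" and enum: "sorted_enum (progeny N E) (Aset N E) a"
    and i: "1 < i" "i \<le> card (Aset N E)"
  shows "Mf N E (a i) = 1/2 * log 2 (real (progeny N E (a i)) / real (progeny N E (a (i - 1))))"
proof -
  have edge: "(a (i - 1), a i) \<in> E"
    using sorted_enum_Aset_edge[OF assms] .
  have "i - 1 \<in> {1..card (Aset N E)}" "i \<in> {1..card (Aset N E)}"
    using i by auto
  then have A: "a (i - 1) \<in> Aset N E" "a i \<in> Aset N E"
    using sorted_enum_in[OF enum] by blast+
  have "a (i - 1) \<in> Aset N (cut E (a i))"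
    using Aset_cut_above[OF F A(1) r_into_rtrancl[OF edge] forest_edge_neq[OF F edge]] .
  then show ?thesis
    using Mf_eq_log_child[OF F A(2) _ edge] by blast
qed

theorem lemma1:
  fixes N :: "'a::linorder set" and E :: "('a \<times> 'a) set"
  assumes "forest N E" and "N \<noteq> {}"
  shows "{x \<in> N. Mf N E x \<noteq> 0} = Aset N E
    \<and> (\<exists>a. bij_betw a {1..card (Aset N E)} (Aset N E)
            \<and> (\<forall>i j. 1 \<le> i \<and> i < j \<and> j \<le> card (Aset N E) \<longrightarrow>
                   progeny N E (a i) < progeny N E (a j)))
    \<and> (\<forall>a. bij_betw a {1..card (Aset N E)} (Aset N E)
            \<and> (\<forall>i j. 1 \<le> i \<and> i < j \<and> j \<le> card (Aset N E) \<longrightarrow>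
                   progeny N E (a i) < progeny N E (a j))
          \<longrightarrow> (let k = card (Aset N E) in
                a k = r1 N E
              \<and> (k = 1 \<longrightarrow> Mf N E (r1 N E) = 1/2)
              \<and> (k \<ge> 2 \<longrightarrow>
                   (\<forall>i. 1 < i \<and> i \<le> k \<longrightarrow>
                      Mf N E (a i) = 1/2 * log 2 (real (progeny N E (a i)) / real (progeny N E (a (i - 1)))))
                 \<and> 1/2 * log 2 (2 * real (progeny N E (a 1)) / real (Pstar N E)) \<le> Mf N E (a 1)
                 \<and> Mf N E (a 1) \<le> 1/2)))"
proof -
  note F = assms(1)
  let ?A = "Aset N E" and ?P = "progeny N E"
  have r1: "r1 N E \<in> ?A" "r1 N E \<in> roots N E"
    using r1_in_Aset[OF assms] r1_in_roots[OF assms] .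
  have "a (card ?A) = r1 N E" and "card ?A = 1 \<Longrightarrow> Mf N E (r1 N E) = 1/2"
    and "1 < i \<Longrightarrow> i \<le> card ?A \<Longrightarrow> Mf N E (a i) = 1/2 * log 2 (real (?P (a i)) / real (?P (a (i - 1))))"
    and "2 \<le> card ?A \<Longrightarrow> 1/2 * log 2 (2 * real (?P (a 1)) / real (Pstar N E)) \<le> Mf N E (a 1)
                          \<and> Mf N E (a 1) \<le> 1/2"
    if enum: "sorted_enum ?P ?A a" for a i
  proof -
    show "a (card ?A) = r1 N E"
      using sorted_enum_last[OF enum r1(1)] progeny_mono[OF F Aset_below_r1[OF F]] by blast
    show "card ?A = 1 \<Longrightarrow> Mf N E (r1 N E) = 1/2"
      using Mf_eq_half[OF r1(1)] cut_root[OF r1(2)] by simp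
    show "1 < i \<Longrightarrow> i \<le> card ?A \<Longrightarrow> Mf N E (a i) = 1/2 * log 2 (real (?P (a i)) / real (?P (a (i - 1))))"
      using Mf_sorted_enum_step[OF F enum] .
    assume "2 \<le> card ?A"
    then have "a 1 \<in> ?A"
      using sorted_enum_in[OF enum] by simp
    then show "1/2 * log 2 (2 * real (?P (a 1)) / real (Pstar N E)) \<le> Mf N E (a 1) \<and> Mf N E (a 1) \<le> 1/2"
      using Mf_least_Aset_ge[OF F _ sorted_enum_first_le[OF enum]] Mf_Aset_le_half[OF F] by blast
  qed
  moreover have "\<exists>a. sorted_enum ?P ?A a"
    using sorted_enum_exists[OF finite_Aset[OF F] progeny_inj_on_Aset[OF F]] .
  ultimately show ?thesis
    using Mf_support[OF F] unfolding sorted_enum_def Let_def by blast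
qed

end
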